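(* Let $1\le d_1\le d_2$, let $G=(V,E)$ be a finite connected undirected unweighted $(d_1,d_2)$-bidegreed graph with $n$ vertices, and let $\alpha=d_2/d_1$. Then for every $\lambda\in[0,1]$ and every initial mutant set $S_0\subseteq V$, the expected absorption time of the $\lambda$-mixed Moran process with fitness $r$ is at most $O_r(n^4\alpha^2)$ if $r\ne 1$ (i.e., at most $C_r n^4\alpha^2$ with $C_r$ depending only on $r$), and at most $O(n^4\alpha^4)$ if $r=1$.
   Context: A graph is $(d_1,d_2)$-bidegreed, $d_1\le d_2$, if every vertex has degree in $\{d_1,d_2\}$. The $\lambda$-mixed Moran process on a connected graph $G=(V,E)$ with $n=|V|\ge 2$: each vertex hosts a resident (fitness $1$) or mutant (fitness $r>0$); the state is the mutant set $S_t\subseteq V$. Each step, independently: with probability $\lambda$ a Birth-death step (a vertex $u$ chosen with probability proportional to fitness among all vertices; a uniformly random neighbor of $u$ takes $u$'s type); with probability $1-\lambda$ a death-Birth step (a uniformly random vertex $v$ dies; a neighbor $u$ of $v$ chosen with probability proportional to fitness among the neighbors of $v$; $v$ takes $u$'s type). The absorption time is the expected number of steps until $S_t\in\{\emptyset,V\}$. *)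

theory Defs
  imports "HOL-Analysis.Analysis"
begin

definition nbrs :: "nat set \<Rightarrow> (nat \<Rightarrow> nat \<Rightarrow> bool) \<Rightarrow> nat \<Rightarrow> nat set" where
  "nbrs V E v = {u \<in> V. E v u}"

definition deg :: "nat set \<Rightarrow> (nat \<Rightarrow> nat \<Rightarrow> bool) \<Rightarrow> nat \<Rightarrow> nat" where
  "deg V E v = card (nbrs V E v)"

definition simple_graph :: "nat set \<Rightarrow> (nat \<Rightarrow> nat \<Rightarrow> bool) \<Rightarrow> bool" where
  "simple_graph V E \<longleftrightarrow> finite V \<and> (\<forall>u v. E u v \<longrightarrow> u \<in> V \<and> v \<in> V)
     \<and> (\<forall>u v. E u v \<longrightarrow> E v u) \<and> (\<forall>v. \<not> E v v)"

definition connected_graph :: "nat set \<Rightarrow> (nat \<Rightarrow> nat \<Rightarrow> bool) \<Rightarrow> bool" where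
  "connected_graph V E \<longleftrightarrow> (\<forall>u\<in>V. \<forall>v\<in>V. E\<^sup>*\<^sup>* u v)"

definition bidegreed :: "nat set \<Rightarrow> (nat \<Rightarrow> nat \<Rightarrow> bool) \<Rightarrow> nat \<Rightarrow> nat \<Rightarrow> bool" where
  "bidegreed V E d1 d2 \<longleftrightarrow> d1 \<le> d2 \<and> (\<forall>v\<in>V. deg V E v \<in> {d1, d2})"

definition fit :: "real \<Rightarrow> nat set \<Rightarrow> nat \<Rightarrow> real" where
  "fit r S u = (if u \<in> S then r else 1)"

definition upd :: "nat set \<Rightarrow> nat \<Rightarrow> nat \<Rightarrow> nat set" where
  "upd S u v = (if u \<in> S then insert v S else S - {v})"

definition trans_prob ::
  "nat set \<Rightarrow> (nat \<Rightarrow> nat \<Rightarrow> bool) \<Rightarrow> real \<Rightarrow> real \<Rightarrow> nat set \<Rightarrow> nat set \<Rightarrow> real" where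
  "trans_prob V E r lam S S' =
     lam * (\<Sum>u\<in>V. \<Sum>v\<in>nbrs V E u.
        (fit r S u / (\<Sum>w\<in>V. fit r S w)) * (1 / real (deg V E u)) *
        (if upd S u v = S' then 1 else 0))
   + (1 - lam) * (\<Sum>v\<in>V. \<Sum>u\<in>nbrs V E v.
        (1 / real (card V)) * (fit r S u / (\<Sum>w\<in>nbrs V E v. fit r S w)) *
        (if upd S u v = S' then 1 else 0))"

definition absorbing :: "nat set \<Rightarrow> nat set \<Rightarrow> bool" where
  "absorbing V S \<longleftrightarrow> S = {} \<or> S = V"

text \<open>surv t S = probability that S_0, ..., S_{t-1} are all non-absorbing and S_t = S.\<close>
fun surv ::
  "nat set \<Rightarrow> (nat \<Rightarrow> nat \<Rightarrow> bool) \<Rightarrow> real \<Rightarrow> real \<Rightarrow> nat set \<Rightarrow> nat \<Rightarrow> nat set \<Rightarrow> real" where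
  "surv V E r lam S0 0 S = (if S = S0 then 1 else 0)"
| "surv V E r lam S0 (Suc t) S' =
     (\<Sum>S\<in>{S. S \<subseteq> V \<and> \<not> absorbing V S}. surv V E r lam S0 t S * trans_prob V E r lam S S')"

text \<open>Expected absorption time E[T] = sum over t of P(T > t), as an extended nonnegative real.\<close>
definition absorption_time ::
  "nat set \<Rightarrow> (nat \<Rightarrow> nat \<Rightarrow> bool) \<Rightarrow> real \<Rightarrow> real \<Rightarrow> nat set \<Rightarrow> ennreal" where
  "absorption_time V E r lam S0 =
     (\<Sum>t. ennreal (\<Sum>S\<in>{S. S \<subseteq> V \<and> \<not> absorbing V S}. surv V E r lam S0 t S))"

end

theory Submission
  imports Defs
begin

(* Weight each vertex x by w x = lam * (d1 + d2 - deg x) + (1 - lam) * deg x and let psi S be the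
   total weight of the vertices carrying the fitter type (the mutants if r = 1).  In the neutral
   process the copy probabilities q across an edge ab satisfy q a b * w b = q b a * w a, and
   selection only tilts these fluxes towards the fitter type, so psi is a submartingale.  While
   the process is not absorbed, some edge joins the two types; copying the fitter type along it
   has probability at least 1/n^2 and changes psi by at least d1.  Hence psi^2 gains at least
   d1^2/n^2 per step in expectation, and since 0 <= psi^2 <= (n d2)^2, the additive drift
   argument bounds the expected absorption time by n^4 (d2/d1)^2 for all r > 0 and lam. *)

lemma suminf_le_of_drift:
  fixes A Psi :: "nat \<Rightarrow> real"
  assumes A_nonneg: "\<And>t. 0 \<le> A t"
    and Psi_le: "\<And>t. Psi t \<le> M" and Psi_0: "m \<le> Psi 0"
    and eps: "eps > 0"
    and drift: "\<And>t. Psi t + eps * A t \<le> Psi (Suc t)"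
  shows "summable A" and "suminf A \<le> (M - m) / eps"
proof -
  have accumulated: "Psi 0 + eps * (\<Sum>i<t. A i) \<le> Psi t" for t
  proof (induction t)
    case (Suc t)
    then show ?case using drift[of t] by (simp add: algebra_simps)
  qed simp
  have partial_sums: "(\<Sum>i<t. A i) \<le> (M - m) / eps" for t
    using accumulated[of t] Psi_le[of t] Psi_0 eps by (simp add: field_simps)
  show "summable A" by (rule summableI_nonneg_bounded[OF A_nonneg partial_sums])
  then show "suminf A \<le> (M - m) / eps" using partial_sums by (rule suminf_le_const)
qed

abbreviation transient :: "nat set \<Rightarrow> nat set set" where
  "transient V \<equiv> {S. S \<subseteq> V \<and> \<not> absorbing V S}"

lemma surv_nonneg:
  assumes "\<And>S S'. 0 \<le> trans_prob V E r lam S S'"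
  shows "0 \<le> surv V E r lam S0 t S"
  by (induction t arbitrary: S) (auto intro!: sum_nonneg mult_nonneg_nonneg assms)

lemma sum_surv_Suc:
  "(\<Sum>S'\<in>transient V. surv V E r lam S0 (Suc t) S' * h S')
   = (\<Sum>S\<in>transient V. surv V E r lam S0 t S * (\<Sum>S'\<in>transient V. trans_prob V E r lam S S' * h S'))"
  by (simp add: sum_distrib_left sum_distrib_right mult.assoc) (rule sum.swap)

(* Shifting g down by K makes it nonpositive, so dropping the absorbing successors can only
   increase the expectation. *)
lemma shifted_drift_on_transient:
  fixes g :: "nat set \<Rightarrow> real"
  assumes "finite V" and "S \<in> transient V"
    and trans_nonneg: "\<And>S'. 0 \<le> trans_prob V E r lam S S'"
    and trans_sum: "(\<Sum>S'\<in>Pow V. trans_prob V E r lam S S') = 1"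
    and g_le: "\<And>S'. S' \<subseteq> V \<Longrightarrow> g S' \<le> K"
    and drift: "g S + eps \<le> (\<Sum>S'\<in>Pow V. trans_prob V E r lam S S' * g S')"
  shows "(g S - K) + eps \<le> (\<Sum>S'\<in>transient V. trans_prob V E r lam S S' * (g S' - K))"
proof -
  let ?P = "trans_prob V E r lam S"
  have "(g S - K) + eps \<le> (\<Sum>S'\<in>Pow V. ?P S' * g S') - K * (\<Sum>S'\<in>Pow V. ?P S')"
    using drift trans_sum by simp
  also have "\<dots> = (\<Sum>S'\<in>Pow V. ?P S' * (g S' - K))"
    by (simp add: algebra_simps sum_subtractf sum_distrib_left)
  also have "\<dots> = (\<Sum>S'\<in>transient V. ?P S' * (g S' - K))
      + (\<Sum>S'\<in>Pow V - transient V. ?P S' * (g S' - K))"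
    using \<open>finite V\<close> by (simp add: sum.subset_diff[of "transient V" "Pow V"] subset_eq)
  also have "\<dots> \<le> (\<Sum>S'\<in>transient V. ?P S' * (g S' - K))"
    using trans_nonneg g_le by (auto intro!: sum_nonpos mult_nonneg_nonpos)
  finally show ?thesis .
qed

lemma absorption_time_le_of_drift:
  fixes g :: "nat set \<Rightarrow> real"
  assumes "finite V" and "S0 \<subseteq> V" and "eps > 0"
    and trans_nonneg: "\<And>S S'. 0 \<le> trans_prob V E r lam S S'"
    and trans_sum: "\<And>S. S \<in> transient V \<Longrightarrow> (\<Sum>S'\<in>Pow V. trans_prob V E r lam S S') = 1"
    and g_bounds: "\<And>S. S \<subseteq> V \<Longrightarrow> 0 \<le> g S \<and> g S \<le> K"
    and drift: "\<And>S. S \<in> transient V \<Longrightarrow>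
                  g S + eps \<le> (\<Sum>S'\<in>Pow V. trans_prob V E r lam S S' * g S')"
  shows "absorption_time V E r lam S0 \<le> ennreal (K / eps)"
proof -
  let ?N = "transient V" and ?P = "trans_prob V E r lam" and ?surv = "surv V E r lam S0"
  define A where "A t = (\<Sum>S\<in>?N. ?surv t S)" for t
  define Psi where "Psi t = (\<Sum>S\<in>?N. ?surv t S * (g S - K))" for t
  note surv_ge_0 = surv_nonneg[OF trans_nonneg]
  have "Psi t + eps * A t \<le> Psi (Suc t)" for t
  proof -
    have "Psi t + eps * A t = (\<Sum>S\<in>?N. ?surv t S * ((g S - K) + eps))"
      unfolding Psi_def A_def sum_distrib_left sum.distrib[symmetric] by (simp add: algebra_simps)
    also have "\<dots> \<le> (\<Sum>S\<in>?N. ?surv t S * (\<Sum>S'\<in>?N. ?P S S' * (g S' - K)))"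
      using assms(1) trans_nonneg trans_sum g_bounds drift
      by (intro sum_mono mult_left_mono shifted_drift_on_transient surv_ge_0) auto
    also have "\<dots> = Psi (Suc t)" by (simp only: Psi_def sum_surv_Suc)
    finally show ?thesis .
  qed
  moreover have "Psi t \<le> 0" for t
    unfolding Psi_def using g_bounds by (intro sum_nonpos mult_nonneg_nonpos surv_ge_0) auto
  moreover have "- K \<le> Psi 0"
    using g_bounds[OF \<open>S0 \<subseteq> V\<close>] g_bounds[of "{}"] \<open>finite V\<close>
    by (simp add: Psi_def if_distrib[of "\<lambda>x. x * _"] cong: if_cong)
  moreover have "0 \<le> A t" for t unfolding A_def by (intro sum_nonneg surv_ge_0)
  ultimately have "summable A" and A_le: "suminf A \<le> K / eps"
    using suminf_le_of_drift[of A Psi 0 "- K" eps] \<open>eps > 0\<close> by auto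
  have "absorption_time V E r lam S0 = (\<Sum>t. ennreal (A t))"
    unfolding absorption_time_def A_def ..
  also have "\<dots> = ennreal (suminf A)"
    using \<open>summable A\<close> \<open>\<And>t. 0 \<le> A t\<close> by (simp add: suminf_ennreal2)
  finally show ?thesis using A_le by (simp add: ennreal_leI)
qed

lemma sum_indicator_pushforward:
  fixes c :: "'i \<Rightarrow> 'j \<Rightarrow> real"
  assumes "finite A" and "\<And>i j. i \<in> I \<Longrightarrow> j \<in> J \<Longrightarrow> X i j \<in> A"
  shows "(\<Sum>a\<in>A. (\<Sum>i\<in>I. \<Sum>j\<in>J. c i j * (if X i j = a then 1 else 0)) * f a)
       = (\<Sum>i\<in>I. \<Sum>j\<in>J. c i j * f (X i j))"
proof -
  have "(\<Sum>a\<in>A. (\<Sum>i\<in>I. \<Sum>j\<in>J. c i j * (if X i j = a then 1 else 0)) * f a)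
      = (\<Sum>i\<in>I. \<Sum>j\<in>J. \<Sum>a\<in>A. c i j * (if X i j = a then 1 else 0) * f a)"
    by (simp add: sum_distrib_right sum.swap[where A = A])
  also have "\<dots> = (\<Sum>i\<in>I. \<Sum>j\<in>J. c i j * f (X i j))"
    using assms by (intro sum.cong refl) (simp add: if_distrib[of "\<lambda>x. _ * x * _"] cong: if_cong)
  finally show ?thesis .
qed

lemma sum_sum_nonneg_of_pairs:
  fixes H :: "'a \<Rightarrow> 'a \<Rightarrow> real"
  assumes "\<And>u v. u \<in> A \<Longrightarrow> v \<in> A \<Longrightarrow> 0 \<le> H u v + H v u"
  shows "0 \<le> (\<Sum>u\<in>A. \<Sum>v\<in>A. H u v)"
proof -
  have "0 \<le> (\<Sum>u\<in>A. \<Sum>v\<in>A. H u v + H v u)" by (intro sum_nonneg assms)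
  also have "\<dots> = 2 * (\<Sum>u\<in>A. \<Sum>v\<in>A. H u v)"
    by (simp add: sum.distrib sum.swap[of "\<lambda>u v. H v u"])
  finally show ?thesis by simp
qed

lemma inverse_card_le_divide_sum:
  fixes f :: "'a \<Rightarrow> real"
  assumes "finite A" "A \<noteq> {}" "\<And>x. x \<in> A \<Longrightarrow> 0 < f x" "\<And>x. x \<in> A \<Longrightarrow> f x \<le> c"
  shows "1 / card A \<le> c / sum f A"
proof -
  have "0 < sum f A" using assms by (intro sum_pos) auto
  moreover have "sum f A \<le> card A * c" using sum_bounded_above[of A f c] assms by simp
  moreover have "0 < card A" using assms(1,2) by (simp add: card_gt_0_iff)
  ultimately show ?thesis by (simp add: field_simps)
qed

lemma divide_sum_le_inverse_card:
  fixes f :: "'a \<Rightarrow> real"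
  assumes "finite A" "A \<noteq> {}" "\<And>x. x \<in> A \<Longrightarrow> 0 < f x" "\<And>x. x \<in> A \<Longrightarrow> c \<le> f x"
  shows "c / sum f A \<le> 1 / card A"
proof -
  have "0 < sum f A" using assms by (intro sum_pos) auto
  moreover have "card A * c \<le> sum f A" using sum_bounded_below[of A c f] assms by simp
  moreover have "0 < card A" using assms(1,2) by (simp add: card_gt_0_iff)
  ultimately show ?thesis by (simp add: field_simps)
qed

lemma connected_graph_crossing_edge:
  assumes "connected_graph V E" and "S \<subseteq> V" and "a \<in> S" and "b \<in> V" and "b \<notin> S"
  shows "\<exists>x y. E x y \<and> x \<in> S \<and> y \<notin> S"
proof -
  have "E\<^sup>*\<^sup>* a b" using assms(1-4) unfolding connected_graph_def by auto
  then show ?thesis using \<open>a \<in> S\<close> \<open>b \<notin> S\<close>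
  proof (induction rule: rtranclp_induct)
    case (step y z)
    then show ?case by (cases "y \<in> S") auto
  qed simp
qed

locale bidegreed_moran =
  fixes V :: "nat set" and E :: "nat \<Rightarrow> nat \<Rightarrow> bool" and r lam :: real and d1 d2 :: nat
  assumes simple: "simple_graph V E" and connected: "connected_graph V E"
    and card_ge_2: "card V \<ge> 2" and d1_pos: "1 \<le> d1" and bidegreed: "bidegreed V E d1 d2"
    and lam_nonneg: "0 \<le> lam" and lam_le_1: "lam \<le> 1" and r_pos: "r > 0"
begin

abbreviation "n \<equiv> real (card V)"
abbreviation "dg x \<equiv> real (deg V E x)"

definition "total_fit S = (\<Sum>x\<in>V. fit r S x)"
definition "nbr_fit S v = (\<Sum>x\<in>nbrs V E v. fit r S x)"
definition "bd_prob S u v = fit r S u / total_fit S * (1 / dg u)"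
definition "db_prob S u v = 1 / n * (fit r S u / nbr_fit S v)"
definition "copy_prob S u v = lam * bd_prob S u v + (1 - lam) * db_prob S u v"

lemma finite_V: "finite V" using simple by (simp add: simple_graph_def)
lemma edge_in_V: "E u v \<Longrightarrow> u \<in> V \<and> v \<in> V" using simple by (simp add: simple_graph_def)
lemma edge_sym: "E u v \<Longrightarrow> E v u" using simple by (simp add: simple_graph_def)
lemma n_pos: "n > 0" using card_ge_2 by simp
lemma finite_nbrs: "finite (nbrs V E v)" using finite_V by (simp add: nbrs_def)
lemma d1_le_d2: "d1 \<le> d2" using bidegreed by (simp add: bidegreed_def)
lemma deg_cases: "v \<in> V \<Longrightarrow> deg V E v = d1 \<or> deg V E v = d2"
  using bidegreed by (auto simp: bidegreed_def)
lemma deg_pos: "v \<in> V \<Longrightarrow> dg v \<ge> 1" using deg_cases[of v] d1_pos d1_le_d2 by auto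
lemma deg_le_n: "dg v \<le> n" unfolding deg_def nbrs_def by (simp add: card_mono finite_V)
lemma nbrs_nonempty: "v \<in> V \<Longrightarrow> nbrs V E v \<noteq> {}" using deg_pos[of v] by (auto simp: deg_def)
lemma fit_pos: "fit r S x > 0" using r_pos by (simp add: fit_def)

lemma sum_nbrs:
  "(\<Sum>u\<in>V. \<Sum>v\<in>nbrs V E u. f u v) = (\<Sum>u\<in>V. \<Sum>v\<in>V. if E u v then f u v else 0)"
  unfolding nbrs_def using finite_V by (simp add: sum.inter_filter)

lemma sum_nbrs_swap:
  "(\<Sum>v\<in>V. \<Sum>u\<in>nbrs V E v. f u v) = (\<Sum>u\<in>V. \<Sum>v\<in>V. if E u v then f u v else 0)"
proof -
  have "(\<Sum>v\<in>V. \<Sum>u\<in>nbrs V E v. f u v) = (\<Sum>v\<in>V. \<Sum>u\<in>V. if E v u then f u v else 0)"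
    by (rule sum_nbrs)
  also have "\<dots> = (\<Sum>u\<in>V. \<Sum>v\<in>V. if E v u then f u v else 0)" by (rule sum.swap)
  also have "\<dots> = (\<Sum>u\<in>V. \<Sum>v\<in>V. if E u v then f u v else 0)"
    using edge_sym by (intro sum.cong refl) (metis (full_types))
  finally show ?thesis .
qed

lemma trans_prob_eq:
  "trans_prob V E r lam S S' =
     (\<Sum>u\<in>V. \<Sum>v\<in>V. (if E u v then copy_prob S u v else 0) * (if upd S u v = S' then 1 else 0))"
proof -
  let ?I = "\<lambda>u v. if upd S u v = S' then 1 else (0::real)"
  have "trans_prob V E r lam S S' =
      lam * (\<Sum>u\<in>V. \<Sum>v\<in>nbrs V E u. bd_prob S u v * ?I u v)
      + (1 - lam) * (\<Sum>v\<in>V. \<Sum>u\<in>nbrs V E v. db_prob S u v * ?I u v)"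
    by (simp only: trans_prob_def bd_prob_def db_prob_def total_fit_def nbr_fit_def)
  also have "\<dots> = (\<Sum>u\<in>V. \<Sum>v\<in>V. lam * (if E u v then bd_prob S u v * ?I u v else 0)
      + (1 - lam) * (if E u v then db_prob S u v * ?I u v else 0))"
    unfolding sum_nbrs[of "\<lambda>u v. bd_prob S u v * ?I u v"]
      sum_nbrs_swap[of "\<lambda>u v. db_prob S u v * ?I u v"]
    by (simp only: sum_distrib_left sum.distrib)
  also have "\<dots> = (\<Sum>u\<in>V. \<Sum>v\<in>V. (if E u v then copy_prob S u v else 0) * ?I u v)"
    by (intro sum.cong refl) (simp add: copy_prob_def algebra_simps)
  finally show ?thesis .
qed

lemma trans_prob_expectation:
  assumes "S \<subseteq> V"
  shows "(\<Sum>S'\<in>Pow V. trans_prob V E r lam S S' * f S') =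
           (\<Sum>u\<in>V. \<Sum>v\<in>V. (if E u v then copy_prob S u v else 0) * f (upd S u v))"
  unfolding trans_prob_eq using assms finite_V
  by (intro sum_indicator_pushforward) (auto simp: upd_def)

lemma total_fit_pos: "0 < total_fit S"
  unfolding total_fit_def using fit_pos finite_V card_ge_2 by (intro sum_pos) auto

lemma nbr_fit_pos: "v \<in> V \<Longrightarrow> 0 < nbr_fit S v"
  unfolding nbr_fit_def using fit_pos finite_nbrs nbrs_nonempty by (intro sum_pos) auto

lemma copy_prob_nonneg: "0 \<le> copy_prob S u v"
proof -
  have "0 \<le> nbr_fit S v" unfolding nbr_fit_def using fit_pos by (intro sum_nonneg less_imp_le)
  then have "0 \<le> bd_prob S u v" and "0 \<le> db_prob S u v"
    using fit_pos[of S u] total_fit_pos[of S] by (simp_all add: bd_prob_def db_prob_def)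
  then show ?thesis using lam_nonneg lam_le_1 by (simp add: copy_prob_def)
qed

lemma trans_prob_nonneg: "0 \<le> trans_prob V E r lam S S'"
  unfolding trans_prob_eq by (intro sum_nonneg) (simp add: copy_prob_nonneg)

lemma bd_prob_sum: "(\<Sum>u\<in>V. \<Sum>v\<in>nbrs V E u. bd_prob S u v) = 1"
proof -
  have "(\<Sum>v\<in>nbrs V E u. bd_prob S u v) = fit r S u / total_fit S" if "u \<in> V" for u
    using deg_pos[OF that] by (simp add: bd_prob_def deg_def)
  then have "(\<Sum>u\<in>V. \<Sum>v\<in>nbrs V E u. bd_prob S u v) = (\<Sum>u\<in>V. fit r S u) / total_fit S"
    by (simp add: sum_divide_distrib)
  then show ?thesis using total_fit_pos[of S] by (simp add: total_fit_def)
qed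

lemma db_prob_sum: "(\<Sum>v\<in>V. \<Sum>u\<in>nbrs V E v. db_prob S u v) = 1"
proof -
  have "(\<Sum>u\<in>nbrs V E v. db_prob S u v) = 1 / n" if "v \<in> V" for v
    using nbr_fit_pos[OF that, of S]
    by (simp add: db_prob_def sum_divide_distrib[symmetric] sum_distrib_left[symmetric] nbr_fit_def)
  then show ?thesis using n_pos by simp
qed

lemma copy_prob_sum: "(\<Sum>u\<in>V. \<Sum>v\<in>V. if E u v then copy_prob S u v else 0) = 1"
proof -
  have "(\<Sum>u\<in>V. \<Sum>v\<in>V. if E u v then copy_prob S u v else 0)
      = (\<Sum>u\<in>V. \<Sum>v\<in>V. lam * (if E u v then bd_prob S u v else 0)
          + (1 - lam) * (if E u v then db_prob S u v else 0))"
    by (intro sum.cong refl) (simp add: copy_prob_def)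
  also have "\<dots> = lam * (\<Sum>u\<in>V. \<Sum>v\<in>nbrs V E u. bd_prob S u v)
      + (1 - lam) * (\<Sum>v\<in>V. \<Sum>u\<in>nbrs V E v. db_prob S u v)"
    unfolding sum_nbrs[of "bd_prob S"] sum_nbrs_swap[of "db_prob S"]
    by (simp only: sum_distrib_left sum.distrib)
  finally show ?thesis by (simp add: bd_prob_sum db_prob_sum)
qed

lemma trans_prob_sum: "S \<subseteq> V \<Longrightarrow> (\<Sum>S'\<in>Pow V. trans_prob V E r lam S S') = 1"
  using trans_prob_expectation[of S "\<lambda>_. 1"] copy_prob_sum[of S] by simp

definition "favoured S x \<longleftrightarrow> (x \<in> S) = (1 \<le> r)"

(* copy_prob at r = 1 *)
definition "neutral_prob u v = lam * (1 / n * (1 / dg u)) + (1 - lam) * (1 / n * (1 / dg v))"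

(* Across an edge between vertices of different degrees, d1 + d2 - deg x is the degree of the
   other endpoint; this is what balances the neutral fluxes. *)
definition "weight x = lam * (real d1 + real d2 - dg x) + (1 - lam) * dg x"

definition "potential S = (\<Sum>x\<in>V. weight x * of_bool (favoured S x))"

definition "jump S u v = weight v * (of_bool (favoured S u) - of_bool (favoured S v))"

lemma fit_le_favoured: "favoured S u \<Longrightarrow> fit r S x \<le> fit r S u"
  by (auto simp: favoured_def fit_def)

lemma fit_unfavoured_le: "\<not> favoured S u \<Longrightarrow> fit r S u \<le> fit r S x"
  by (auto simp: favoured_def fit_def)

lemma neutral_le_copy_prob:
  assumes "E u v" and "favoured S u"
  shows "neutral_prob u v \<le> copy_prob S u v"
proof -
  have u: "u \<in> V" and v: "v \<in> V" using edge_in_V[OF assms(1)] by auto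
  have "1 / n \<le> fit r S u / total_fit S"
    unfolding total_fit_def using finite_V card_ge_2 fit_pos fit_le_favoured[OF assms(2)]
    by (intro inverse_card_le_divide_sum) auto
  moreover have "1 / dg v \<le> fit r S u / nbr_fit S v"
    unfolding nbr_fit_def deg_def
    using finite_nbrs nbrs_nonempty[OF v] fit_pos fit_le_favoured[OF assms(2)]
    by (intro inverse_card_le_divide_sum) auto
  ultimately show ?thesis
    using lam_nonneg lam_le_1 n_pos deg_pos[OF u]
    unfolding neutral_prob_def copy_prob_def bd_prob_def db_prob_def
    by (intro add_mono mult_left_mono mult_right_mono) auto
qed

lemma copy_prob_le_neutral:
  assumes "E u v" and "\<not> favoured S u"
  shows "copy_prob S u v \<le> neutral_prob u v"
proof -
  have u: "u \<in> V" and v: "v \<in> V" using edge_in_V[OF assms(1)] by auto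
  have "fit r S u / total_fit S \<le> 1 / n"
    unfolding total_fit_def using finite_V card_ge_2 fit_pos fit_unfavoured_le[OF assms(2)]
    by (intro divide_sum_le_inverse_card) auto
  moreover have "fit r S u / nbr_fit S v \<le> 1 / dg v"
    unfolding nbr_fit_def deg_def
    using finite_nbrs nbrs_nonempty[OF v] fit_pos fit_unfavoured_le[OF assms(2)]
    by (intro divide_sum_le_inverse_card) auto
  ultimately show ?thesis
    using lam_nonneg lam_le_1 n_pos deg_pos[OF u]
    unfolding neutral_prob_def copy_prob_def bd_prob_def db_prob_def
    by (intro add_mono mult_left_mono mult_right_mono) auto
qed

lemma weight_bounds:
  assumes "x \<in> V"
  shows "real d1 \<le> weight x \<and> weight x \<le> real d2"
proof -
  have "real d1 \<le> dg x" and "dg x \<le> real d2" using deg_cases[OF assms] d1_le_d2 by auto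
  then have "0 \<le> lam * (real d2 - dg x)" "0 \<le> (1 - lam) * (dg x - real d1)"
    "0 \<le> lam * (dg x - real d1)" "0 \<le> (1 - lam) * (real d2 - dg x)"
    using lam_nonneg lam_le_1 by simp_all
  then show ?thesis by (simp add: weight_def algebra_simps)
qed

lemma neutral_flux_balance:
  assumes "E a b"
  shows "neutral_prob a b * weight b = neutral_prob b a * weight a"
proof (cases "deg V E a = deg V E b")
  case False
  have a: "a \<in> V" and b: "b \<in> V" using edge_in_V[OF assms] by auto
  then have "deg V E a + deg V E b = d1 + d2" using False deg_cases[OF a] deg_cases[OF b] by auto
  then have wa: "weight a = lam * dg b + (1 - lam) * dg a"
    and wb: "weight b = lam * dg a + (1 - lam) * dg b"
    unfolding weight_def by (simp_all add: of_nat_add[symmetric] del: of_nat_add)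
  show ?thesis unfolding wa wb neutral_prob_def using deg_pos[OF a] deg_pos[OF b] n_pos
    by (simp add: field_simps)
qed (simp add: neutral_prob_def weight_def)

lemma copy_flux_le:
  assumes "E u v" and "favoured S u" and "\<not> favoured S v"
  shows "copy_prob S v u * weight u \<le> copy_prob S u v * weight v"
proof -
  have "0 \<le> weight u" and "0 \<le> weight v"
    using weight_bounds edge_in_V[OF assms(1)] by (auto intro: order_trans[of 0 "real d1"])
  then have "copy_prob S v u * weight u \<le> neutral_prob v u * weight u"
    using copy_prob_le_neutral[OF edge_sym[OF assms(1)] assms(3)] by (simp add: mult_right_mono)
  also have "\<dots> = neutral_prob u v * weight v" using neutral_flux_balance[OF assms(1)] by simp
  also have "\<dots> \<le> copy_prob S u v * weight v"
    using neutral_le_copy_prob[OF assms(1,2)] \<open>0 \<le> weight v\<close> by (simp add: mult_right_mono)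
  finally show ?thesis .
qed

lemma expected_jump_nonneg:
  "0 \<le> (\<Sum>u\<in>V. \<Sum>v\<in>V. (if E u v then copy_prob S u v else 0) * jump S u v)"
proof (rule sum_sum_nonneg_of_pairs)
  fix u v
  show "0 \<le> (if E u v then copy_prob S u v else 0) * jump S u v
            + (if E v u then copy_prob S v u else 0) * jump S v u"
  proof (cases "E u v")
    case True
    then show ?thesis using copy_flux_le[OF True] copy_flux_le[OF edge_sym[OF True]] edge_sym
      by (cases "favoured S u"; cases "favoured S v") (auto simp: jump_def algebra_simps)
  qed (use edge_sym in auto)
qed

lemma potential_upd:
  assumes "v \<in> V"
  shows "potential (upd S u v) = potential S + jump S u v"
proof -
  have split: "potential X = weight v * of_bool (favoured X v)
      + (\<Sum>x\<in>V - {v}. weight x * of_bool (favoured X x))" for X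
    unfolding potential_def by (rule sum.remove[OF finite_V assms])
  have "(\<Sum>x\<in>V - {v}. weight x * of_bool (favoured (upd S u v) x))
      = (\<Sum>x\<in>V - {v}. weight x * of_bool (favoured S x))"
    by (intro sum.cong refl) (auto simp: favoured_def upd_def)
  moreover have "favoured (upd S u v) v \<longleftrightarrow> favoured S u" by (auto simp: favoured_def upd_def)
  ultimately show ?thesis unfolding split[of "upd S u v"] split[of S] jump_def
    by (simp add: algebra_simps)
qed

lemma potential_bounds: "0 \<le> potential S \<and> potential S \<le> n * real d2"
proof -
  have "0 \<le> weight x * of_bool (favoured S x) \<and> weight x * of_bool (favoured S x) \<le> real d2"
    if "x \<in> V" for x
    using weight_bounds[OF that] by (auto intro: order_trans[of 0 "real d1"])
  then show ?thesis unfolding potential_def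
    using sum_bounded_above[of V _ "real d2"] by (auto intro: sum_nonneg)
qed

lemma favoured_crossing_edge:
  assumes "S \<in> transient V"
  obtains u v where "E u v" and "favoured S u" and "\<not> favoured S v"
proof -
  obtain a b where "a \<in> S" "b \<in> V" "b \<notin> S" using assms by (auto simp: absorbing_def)
  then obtain x y where "E x y" "x \<in> S" "y \<notin> S"
    using connected_graph_crossing_edge[OF connected] assms by blast
  then show ?thesis using that edge_sym by (cases "1 \<le> r") (auto simp: favoured_def)
qed

lemma neutral_prob_ge:
  assumes "u \<in> V" and "v \<in> V"
  shows "1 / n\<^sup>2 \<le> neutral_prob u v"
proof -
  have "1 / n\<^sup>2 \<le> 1 / n * (1 / dg x)" if "x \<in> V" for x
    using deg_pos[OF that] deg_le_n[of x] n_pos by (simp add: power2_eq_square frac_le)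
  then have "lam * (1 / n\<^sup>2) + (1 - lam) * (1 / n\<^sup>2) \<le> neutral_prob u v"
    unfolding neutral_prob_def using assms lam_nonneg lam_le_1
    by (intro add_mono mult_left_mono) auto
  then show ?thesis by (simp add: add_divide_distrib[symmetric])
qed

lemma expected_sq_jump_ge:
  assumes "S \<in> transient V"
  shows "real d1 ^ 2 / n\<^sup>2 \<le> (\<Sum>u\<in>V. \<Sum>v\<in>V. (if E u v then copy_prob S u v else 0) * (jump S u v)\<^sup>2)"
proof -
  define H where "H u v = (if E u v then copy_prob S u v else 0) * (jump S u v)\<^sup>2" for u v
  obtain u v where uv: "E u v" "favoured S u" "\<not> favoured S v"
    using favoured_crossing_edge[OF assms] .
  have u: "u \<in> V" and v: "v \<in> V" using edge_in_V[OF uv(1)] by auto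
  have "real d1 ^ 2 \<le> (weight v)\<^sup>2" using weight_bounds[OF v] by (auto intro: power_mono)
  moreover have "0 \<le> neutral_prob u v"
    using neutral_prob_ge[OF u v] n_pos by (meson order_trans zero_le_divide_1_iff zero_le_power2)
  ultimately have "1 / n\<^sup>2 * real d1 ^ 2 \<le> neutral_prob u v * (weight v)\<^sup>2"
    using neutral_prob_ge[OF u v] by (intro mult_mono) auto
  then have "real d1 ^ 2 / n\<^sup>2 \<le> neutral_prob u v * (weight v)\<^sup>2" by simp
  also have "\<dots> \<le> H u v"
    using neutral_le_copy_prob[OF uv(1,2)] uv by (simp add: H_def jump_def mult_right_mono)
  also have "\<dots> \<le> (\<Sum>v'\<in>V. H u v')"
    using v finite_V copy_prob_nonneg by (intro member_le_sum) (auto simp: H_def)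
  also have "\<dots> \<le> (\<Sum>u'\<in>V. \<Sum>v'\<in>V. H u' v')"
    using u finite_V copy_prob_nonneg by (intro member_le_sum sum_nonneg) (auto simp: H_def)
  finally show ?thesis unfolding H_def .
qed

lemma potential_sq_drift:
  assumes "S \<in> transient V"
  shows "(potential S)\<^sup>2 + real d1 ^ 2 / n\<^sup>2
           \<le> (\<Sum>S'\<in>Pow V. trans_prob V E r lam S S' * (potential S')\<^sup>2)"
proof -
  define c where "c u v = (if E u v then copy_prob S u v else 0)" for u v
  define p where "p = potential S"
  have "c u v * (potential (upd S u v))\<^sup>2 = p\<^sup>2 * c u v + 2 * p * (c u v * jump S u v)
      + c u v * (jump S u v)\<^sup>2" for u v
    using potential_upd[of v S u] edge_in_V[of u v]
    by (cases "E u v") (simp_all add: c_def p_def power2_eq_square algebra_simps)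
  then have "(\<Sum>S'\<in>Pow V. trans_prob V E r lam S S' * (potential S')\<^sup>2)
      = p\<^sup>2 * (\<Sum>u\<in>V. \<Sum>v\<in>V. c u v) + 2 * p * (\<Sum>u\<in>V. \<Sum>v\<in>V. c u v * jump S u v)
        + (\<Sum>u\<in>V. \<Sum>v\<in>V. c u v * (jump S u v)\<^sup>2)"
    using assms by (simp add: trans_prob_expectation c_def[symmetric] sum.distrib sum_distrib_left)
  moreover have "0 \<le> 2 * p * (\<Sum>u\<in>V. \<Sum>v\<in>V. c u v * jump S u v)"
    using expected_jump_nonneg[of S] potential_bounds[of S] by (simp add: c_def p_def)
  ultimately show ?thesis
    using copy_prob_sum[of S] expected_sq_jump_ge[OF assms] by (simp add: c_def p_def)
qed

lemma absorption_time_le: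
  assumes "S0 \<subseteq> V"
  shows "absorption_time V E r lam S0 \<le> ennreal (n ^ 4 * (real d2 / real d1)\<^sup>2)"
proof -
  have "absorption_time V E r lam S0 \<le> ennreal ((n * real d2)\<^sup>2 / (real d1 ^ 2 / n\<^sup>2))"
  proof (rule absorption_time_le_of_drift[where g = "\<lambda>S. (potential S)\<^sup>2", OF finite_V assms])
    show "0 < real d1 ^ 2 / n\<^sup>2" using d1_pos n_pos by simp
    show "0 \<le> (potential S)\<^sup>2 \<and> (potential S)\<^sup>2 \<le> (n * real d2)\<^sup>2" for S
      using potential_bounds[of S] by (auto intro: power_mono)
  qed (simp_all add: trans_prob_nonneg trans_prob_sum potential_sq_drift)
  also have "(n * real d2)\<^sup>2 / (real d1 ^ 2 / n\<^sup>2) = n ^ 4 * (real d2 / real d1)\<^sup>2"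
    by (simp add: field_simps power2_eq_square eval_nat_numeral)
  finally show ?thesis .
qed

lemma absorption_time_le_power:
  assumes "S0 \<subseteq> V" and "2 \<le> k"
  shows "absorption_time V E r lam S0 \<le> ennreal (n ^ 4 * (real d2 / real d1) ^ k)"
proof -
  have "1 \<le> real d2 / real d1" using d1_le_d2 d1_pos by simp
  then have "(real d2 / real d1)\<^sup>2 \<le> (real d2 / real d1) ^ k"
    by (rule power_increasing[OF \<open>2 \<le> k\<close>])
  then have "n ^ 4 * (real d2 / real d1)\<^sup>2 \<le> n ^ 4 * (real d2 / real d1) ^ k"
    by (rule mult_left_mono) simp
  then show ?thesis using absorption_time_le[OF assms(1)] by (blast intro: order_trans ennreal_leI)
qed

end

theorem mainTheorem11:
  fixes r :: real
  assumes "r > 0"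
  shows "(r \<noteq> 1 \<longrightarrow> (\<exists>C::real. \<forall>(V::nat set) E (d1::nat) d2 (lam::real) S0.
             simple_graph V E \<and> connected_graph V E \<and> card V \<ge> 2 \<and> 1 \<le> d1
             \<and> bidegreed V E d1 d2 \<and> 0 \<le> lam \<and> lam \<le> 1 \<and> S0 \<subseteq> V \<longrightarrow>
             absorption_time V E r lam S0
               \<le> ennreal (C * real (card V) ^ 4 * (real d2 / real d1) ^ 2)))
       \<and> (r = 1 \<longrightarrow> (\<exists>C::real. \<forall>(V::nat set) E (d1::nat) d2 (lam::real) S0.
             simple_graph V E \<and> connected_graph V E \<and> card V \<ge> 2 \<and> 1 \<le> d1
             \<and> bidegreed V E d1 d2 \<and> 0 \<le> lam \<and> lam \<le> 1 \<and> S0 \<subseteq> V \<longrightarrow>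
             absorption_time V E r lam S0
               \<le> ennreal (C * real (card V) ^ 4 * (real d2 / real d1) ^ 4)))"
proof -
  have bound: "absorption_time V E r lam S0 \<le> ennreal (1 * real (card V) ^ 4 * (real d2 / real d1) ^ k)"
    if "simple_graph V E \<and> connected_graph V E \<and> card V \<ge> 2 \<and> 1 \<le> d1
          \<and> bidegreed V E d1 d2 \<and> 0 \<le> lam \<and> lam \<le> 1 \<and> S0 \<subseteq> V" and "2 \<le> k"
    for V E d1 d2 lam S0 and k :: nat
  proof -
    interpret bidegreed_moran V E r lam d1 d2 using that(1) assms by unfold_locales auto
    show ?thesis using that by (simp add: absorption_time_le_power)
  qed
  show ?thesis by (intro conjI impI exI[of _ 1] allI; erule bound) simp_all
qed

end
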